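(* Let $n\ge 3$. The set $\mathbf{W}^{\le 5}_{\mathrm{bf}}(n)$ is the unique maximal transition semigroup of a minimal DFA $\mathcal{D}_n$ of a bifix-free language (with the state conventions below) in which all pairs of states from $Q_M$ are colliding.
   Context: A language is bifix-free if no word of it is a proper prefix or a proper suffix of another word of it. For a minimal complete DFA $\mathcal{D}_n$ of a bifix-free language with $n$ states the states are named $Q=\{0,\dots,n-1\}$ so that $0$ is initial, $n-1$ is the empty state and $n-2$ is the unique final state (quotient $\{\varepsilon\}$). Transformations act on the right, $q(st)=(qs)t$; the transition semigroup $T(n)$ is the semigroup of transformations of $Q$ induced by nonempty words. Let $Q_M=\{1,\dots,n-3\}$. An unordered pair $\{p,q\}$ of distinct states of $Q_M$ is colliding (in $T(n)$) if there is $t\in T(n)$ with $0t=p$ and $rt=q$ for some $r\in Q_M$. Let $\mathbf{B}_{\mathrm{bf}}(n)$ be the set of all transformations $t$ of $Q$ with $0\notin Qt$, $(n-1)t=n-1$, $(n-2)t=n-1$, and for all $j\ge1$, either $0t^j=n-1$ or $0t^j\ne qt^j$ for all $0<q<n-1$. Then $\mathbf{W}^{\le 5}_{\mathrm{bf}}(n)=\{t\in\mathbf{B}_{\mathrm{bf}}(n)\mid$ for all distinct $p,q\in Q_M$, $pt=qt=n-1$ or $pt\ne qt\}$. *)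

theory Defs
  imports Main
begin

text \<open>A DFA with states Q = {0..<n}, alphabet Al, transition function delta
  (letter a maps state q to delta a q), initial state 0 and unique final state n-2.
  Words act on the right: fold applies the first letter first.\<close>

definition word_act :: "('a \<Rightarrow> nat \<Rightarrow> nat) \<Rightarrow> 'a list \<Rightarrow> nat \<Rightarrow> nat" where
  "word_act delta w q = fold delta w q"

definition induced :: "nat \<Rightarrow> ('a \<Rightarrow> nat \<Rightarrow> nat) \<Rightarrow> 'a list \<Rightarrow> (nat \<Rightarrow> nat)" where
  "induced n delta w = (\<lambda>q. if q < n then word_act delta w q else q)"

definition trans_sgrp :: "nat \<Rightarrow> 'a set \<Rightarrow> ('a \<Rightarrow> nat \<Rightarrow> nat) \<Rightarrow> (nat \<Rightarrow> nat) set" where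
  "trans_sgrp n Al delta = {induced n delta w | w. w \<in> lists Al \<and> w \<noteq> []}"

definition dfa_lang :: "nat \<Rightarrow> 'a set \<Rightarrow> ('a \<Rightarrow> nat \<Rightarrow> nat) \<Rightarrow> 'a list set" where
  "dfa_lang n Al delta = {w \<in> lists Al. word_act delta w 0 = n - 2}"

definition bifix_free :: "'a list set \<Rightarrow> bool" where
  "bifix_free L \<longleftrightarrow> (\<forall>u\<in>L. \<forall>v\<in>L. \<forall>x. x \<noteq> [] \<longrightarrow> v \<noteq> u @ x \<and> v \<noteq> x @ u)"

text \<open>Minimal complete DFA of a bifix-free language with the state conventions:
  0 initial, n-1 empty state, n-2 the unique final state with quotient {epsilon}.\<close>
definition bf_min_dfa :: "nat \<Rightarrow> 'a set \<Rightarrow> ('a \<Rightarrow> nat \<Rightarrow> nat) \<Rightarrow> bool" where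
  "bf_min_dfa n Al delta \<longleftrightarrow>
     finite Al \<and>
     (\<forall>a\<in>Al. \<forall>q<n. delta a q < n) \<and>
     (\<forall>q<n. \<exists>w\<in>lists Al. word_act delta w 0 = q) \<and>
     (\<forall>p<n. \<forall>q<n. p \<noteq> q \<longrightarrow>
        (\<exists>w\<in>lists Al. (word_act delta w p = n - 2) \<noteq> (word_act delta w q = n - 2))) \<and>
     bifix_free (dfa_lang n Al delta) \<and>
     (\<forall>w\<in>lists Al. word_act delta w (n - 1) \<noteq> n - 2) \<and>
     (\<forall>w\<in>lists Al. word_act delta w (n - 2) = n - 2 \<longleftrightarrow> w = [])"

definition Q_M :: "nat \<Rightarrow> nat set" where
  "Q_M n = {1..n - 3}"

definition colliding :: "nat \<Rightarrow> (nat \<Rightarrow> nat) set \<Rightarrow> nat \<Rightarrow> nat \<Rightarrow> bool" where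
  "colliding n T p q \<longleftrightarrow>
     (\<exists>t\<in>T. (t 0 = p \<and> (\<exists>r\<in>Q_M n. t r = q)) \<or> (t 0 = q \<and> (\<exists>r\<in>Q_M n. t r = p)))"

definition all_colliding :: "nat \<Rightarrow> (nat \<Rightarrow> nat) set \<Rightarrow> bool" where
  "all_colliding n T \<longleftrightarrow> (\<forall>p\<in>Q_M n. \<forall>q\<in>Q_M n. p \<noteq> q \<longrightarrow> colliding n T p q)"

definition B_bf :: "nat \<Rightarrow> (nat \<Rightarrow> nat) set" where
  "B_bf n = {t. (\<forall>q. n \<le> q \<longrightarrow> t q = q) \<and> (\<forall>q<n. t q < n) \<and>
              (\<forall>q<n. t q \<noteq> 0) \<and> t (n - 1) = n - 1 \<and> t (n - 2) = n - 1 \<and>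
              (\<forall>j\<ge>1. (t ^^ j) 0 = n - 1 \<or>
                  (\<forall>q. 0 < q \<and> q < n - 1 \<longrightarrow> (t ^^ j) 0 \<noteq> (t ^^ j) q))}"

definition W_bf :: "nat \<Rightarrow> (nat \<Rightarrow> nat) set" where
  "W_bf n = {t \<in> B_bf n. \<forall>p\<in>Q_M n. \<forall>q\<in>Q_M n. p \<noteq> q \<longrightarrow>
              (t p = n - 1 \<and> t q = n - 1) \<or> t p \<noteq> t q}"

end

theory Submission
  imports Defs "HOL-Library.FuncSet"
begin

text \<open>Every transformation in W_bf(n) merges distinct states only into the empty state n-1
  (for the initial state this is the case j = 1 of the condition in B_bf(n)). This property is
  closed under composition, which yields the condition for all higher powers t^j.
  In a minimal DFA of a bifix-free language, if a nonempty word w sends 0 and a state r \<noteq> 0 to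
  a common state s, then s is empty: otherwise wv is accepted for some v, and so is uwv for any
  u with 0u = r, contradicting suffix-freeness. If p, q in Q_M collide via 0x = p, rx = q, a merge
  of p and q by w is a merge of 0 and r by xw. Hence every all-colliding transition semigroup
  lies in W_bf(n), and W_bf(n) itself, taken as alphabet acting by application, is a minimal DFA
  of a bifix-free language attaining it.\<close>

definition empty_merging :: "nat \<Rightarrow> (nat \<Rightarrow> nat) set" where
  "empty_merging n = {t. (\<forall>q. n \<le> q \<longrightarrow> t q = q) \<and> (\<forall>q<n. t q < n \<and> t q \<noteq> 0) \<and>
      t (n - 1) = n - 1 \<and> t (n - 2) = n - 1 \<and>
      (\<forall>p<n. \<forall>q<n. p \<noteq> q \<longrightarrow> t p = t q \<longrightarrow> t p = n - 1)}"

lemma empty_mergingI: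
  assumes "\<And>q. n \<le> q \<Longrightarrow> t q = q" "\<And>q. q < n \<Longrightarrow> t q < n" "\<And>q. q < n \<Longrightarrow> t q \<noteq> 0"
    "t (n - 1) = n - 1" "t (n - 2) = n - 1"
    "\<And>p q. p < n \<Longrightarrow> q < n \<Longrightarrow> p \<noteq> q \<Longrightarrow> t p = t q \<Longrightarrow> t p = n - 1"
  shows "t \<in> empty_merging n"
  using assms unfolding empty_merging_def by blast

lemma empty_mergingD:
  assumes "t \<in> empty_merging n"
  shows "n \<le> q \<Longrightarrow> t q = q" "q < n \<Longrightarrow> t q < n" "q < n \<Longrightarrow> t q \<noteq> 0"
    "t (n - 1) = n - 1" "t (n - 2) = n - 1"
    "p < n \<Longrightarrow> q < n \<Longrightarrow> p \<noteq> q \<Longrightarrow> t p = t q \<Longrightarrow> t p = n - 1"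
  using assms unfolding empty_merging_def by blast+

lemma empty_merging_comp:
  assumes f: "f \<in> empty_merging n" and g: "g \<in> empty_merging n"
  shows "g \<circ> f \<in> empty_merging n"
proof (rule empty_mergingI)
  fix p q assume pq: "p < n" "q < n" "p \<noteq> q" and eq: "(g \<circ> f) p = (g \<circ> f) q"
  show "(g \<circ> f) p = n - 1"
  proof (cases "f p = f q")
    case True
    then have "f p = n - 1" using empty_mergingD(6)[OF f] pq by blast
    then show ?thesis using empty_mergingD(4)[OF g] by simp
  next
    case False
    have "f p < n" "f q < n" using empty_mergingD(2)[OF f] pq by auto
    moreover have "g (f p) = g (f q)" using eq by simp
    ultimately have "g (f p) = n - 1" using False by (intro empty_mergingD(6)[OF g])
    then show ?thesis by simp
  qed
next
  show "(g \<circ> f) (n - 1) = n - 1" "(g \<circ> f) (n - 2) = n - 1"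
    using empty_mergingD(4,5)[OF f] empty_mergingD(4)[OF g] by simp_all
qed (simp_all add: empty_mergingD(1-3)[OF f] empty_mergingD(1-3)[OF g])

lemma empty_merging_funpow:
  assumes "t \<in> empty_merging n"
  shows "t ^^ Suc j \<in> empty_merging n"
proof (induction j)
  case (Suc j)
  show ?case using empty_merging_comp[OF Suc.IH assms] by (simp only: funpow.simps)
qed (use assms in simp)

lemma W_bf_subset_empty_merging: "W_bf n \<subseteq> empty_merging n"
proof
  fix t assume "t \<in> W_bf n"
  then have B: "t \<in> B_bf n" and W: "\<forall>p\<in>Q_M n. \<forall>q\<in>Q_M n. p \<noteq> q \<longrightarrow>
      (t p = n - 1 \<and> t q = n - 1) \<or> t p \<noteq> t q"
    unfolding W_bf_def by auto
  have "\<forall>j\<ge>1. (t ^^ j) 0 = n - 1 \<or>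
      (\<forall>q. 0 < q \<and> q < n - 1 \<longrightarrow> (t ^^ j) 0 \<noteq> (t ^^ j) q)"
    using B unfolding B_bf_def by blast
  from this[rule_format, of 1]
  have initial: "t 0 = n - 1 \<or> (\<forall>q. 0 < q \<and> q < n - 1 \<longrightarrow> t 0 \<noteq> t q)"
    by simp
  have empty_final: "t (n - 1) = n - 1" "t (n - 2) = n - 1"
    using B unfolding B_bf_def by auto
  have Q_split: "p = 0 \<or> p \<in> {n - 2, n - 1} \<or> p \<in> Q_M n" if "p < n" for p
    using that unfolding Q_M_def by auto
  have merge: "t p = n - 1" if pq: "p < n" "q < n" "p \<noteq> q" "t p = t q" for p q
  proof -
    consider "p = 0" | "q = 0" | "p \<in> {n - 2, n - 1} \<or> q \<in> {n - 2, n - 1}"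
      | "p \<in> Q_M n \<and> q \<in> Q_M n"
      using Q_split[OF pq(1)] Q_split[OF pq(2)] by blast
    then show ?thesis
    proof cases
      case 1
      then show ?thesis using initial empty_final pq by (cases "q = n - 1") auto
    next
      case 2
      then show ?thesis using initial empty_final pq by (cases "p = n - 1") auto
    next
      case 3
      then show ?thesis using empty_final pq by auto
    next
      case 4
      then show ?thesis using W pq by blast
    qed
  qed
  then show "t \<in> empty_merging n"
    using B unfolding B_bf_def by (intro empty_mergingI) auto
qed

lemma empty_merging_subset_W_bf: "empty_merging n \<subseteq> W_bf n"
proof
  fix t assume t: "t \<in> empty_merging n"
  have "(t ^^ j) 0 = n - 1 \<or> (\<forall>q. 0 < q \<and> q < n - 1 \<longrightarrow> (t ^^ j) 0 \<noteq> (t ^^ j) q)"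
    if j: "j \<ge> 1" for j
  proof -
    obtain k where "j = Suc k" using j by (cases j) auto
    then have "t ^^ j \<in> empty_merging n" using empty_merging_funpow[OF t] by simp
    from empty_mergingD(6)[OF this, of 0] show ?thesis by fastforce
  qed
  moreover have "t p = n - 1 \<and> t q = n - 1 \<or> t p \<noteq> t q"
    if "p \<in> Q_M n" "q \<in> Q_M n" "p \<noteq> q" for p q
  proof -
    have "p < n" "q < n" using that(1,2) unfolding Q_M_def by auto
    with empty_mergingD(6)[OF t] that(3) show ?thesis by metis
  qed
  ultimately show "t \<in> W_bf n"
    using t unfolding W_bf_def B_bf_def empty_merging_def by auto
qed

lemma W_bf_eq_empty_merging: "W_bf n = empty_merging n"
  using W_bf_subset_empty_merging empty_merging_subset_W_bf by blast

lemma finite_empty_merging: "finite (empty_merging n)"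
proof -
  let ?ext = "\<lambda>f q. if q < n then f q else q"
  have "empty_merging n \<subseteq> ?ext ` ({..<n} \<rightarrow>\<^sub>E {..<n})"
  proof
    fix t assume t: "t \<in> empty_merging n"
    have "t = ?ext (restrict t {..<n})" using empty_mergingD(1)[OF t] by (auto simp: fun_eq_iff)
    moreover have "restrict t {..<n} \<in> {..<n} \<rightarrow>\<^sub>E {..<n}" using empty_mergingD(2)[OF t] by auto
    ultimately show "t \<in> ?ext ` ({..<n} \<rightarrow>\<^sub>E {..<n})" by blast
  qed
  then show ?thesis by (rule finite_subset) (simp add: finite_PiE)
qed

lemma word_act_Nil [simp]: "word_act delta [] q = q"
  by (simp add: word_act_def)

lemma word_act_Cons [simp]: "word_act delta (a # w) q = word_act delta w (delta a q)"
  by (simp add: word_act_def)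

lemma word_act_append [simp]: "word_act delta (u @ v) q = word_act delta v (word_act delta u q)"
  by (simp add: word_act_def)

subsection \<open>The DFA over the alphabet W_bf(n)\<close>

lemma word_act_apply_empty_merging:
  assumes "w \<in> lists (empty_merging n)" "w \<noteq> []"
  shows "word_act (\<lambda>t q. t q) w \<in> empty_merging n"
  using assms
proof (induction w)
  case (Cons a w)
  show ?case
  proof (cases "w = []")
    case False
    with Cons have "word_act (\<lambda>t q. t q) w \<circ> a \<in> empty_merging n"
      by (simp add: empty_merging_comp)
    moreover have "word_act (\<lambda>t q. t q) (a # w) = word_act (\<lambda>t q. t q) w \<circ> a"
      by (simp add: fun_eq_iff)
    ultimately show ?thesis by (simp only:)
  qed (use Cons in simp)
qed simp

lemma induced_apply_empty_merging:
  assumes "w \<in> lists (empty_merging n)"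
  shows "induced n (\<lambda>t q. t q) w = word_act (\<lambda>t q. t q) w"
proof -
  have "word_act (\<lambda>t q. t q) w q = q" if "n \<le> q" for q
    using assms that by (induction w) (simp_all add: empty_mergingD(1))
  then show ?thesis unfolding induced_def by (auto simp: fun_eq_iff)
qed

lemma trans_sgrp_apply_empty_merging:
  "trans_sgrp n (empty_merging n) (\<lambda>t q. t q) = empty_merging n"
proof
  show "trans_sgrp n (empty_merging n) (\<lambda>t q. t q) \<subseteq> empty_merging n"
  proof
    fix t assume "t \<in> trans_sgrp n (empty_merging n) (\<lambda>t q. t q)"
    then obtain w where w: "t = induced n (\<lambda>t q. t q) w" "w \<in> lists (empty_merging n)" "w \<noteq> []"
      unfolding trans_sgrp_def by blast
    then have "t = word_act (\<lambda>t q. t q) w" using induced_apply_empty_merging by blast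
    with w(2,3) show "t \<in> empty_merging n" using word_act_apply_empty_merging by blast
  qed
  show "empty_merging n \<subseteq> trans_sgrp n (empty_merging n) (\<lambda>t q. t q)"
  proof
    fix t assume "t \<in> empty_merging n"
    then have single: "[t] \<in> lists (empty_merging n)" by simp
    have "induced n (\<lambda>t q. t q) [t] = word_act (\<lambda>t q. t q) [t]"
      using induced_apply_empty_merging[OF single] .
    also have "\<dots> = t" by (simp add: fun_eq_iff)
    finally show "t \<in> trans_sgrp n (empty_merging n) (\<lambda>t q. t q)"
      using single unfolding trans_sgrp_def by (intro CollectI exI[of _ "[t]"]) auto
  qed
qed

lemma one_point_map_in_empty_merging:
  assumes "a < n - 2" "0 < b" "b < n"
  shows "(\<lambda>x. if x = a then b else if x < n then n - 1 else x) \<in> empty_merging n"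
  using assms unfolding empty_merging_def by auto

lemma collision_map_in_empty_merging:
  assumes "p \<in> Q_M n" "q \<in> Q_M n" "p \<noteq> q"
  shows "(\<lambda>x. if x = 0 then p else if x = q then q else if x < n then n - 1 else x)
    \<in> empty_merging n"
  using assms unfolding empty_merging_def Q_M_def by auto

lemma all_colliding_apply_empty_merging:
  "all_colliding n (trans_sgrp n (empty_merging n) (\<lambda>t q. t q))"
  unfolding all_colliding_def colliding_def trans_sgrp_apply_empty_merging
proof (intro ballI impI)
  fix p q assume pq: "p \<in> Q_M n" "q \<in> Q_M n" "p \<noteq> q"
  let ?t = "\<lambda>x. if x = 0 then p else if x = q then q else if x < n then n - 1 else x"
  have "q \<noteq> 0" using pq(2) unfolding Q_M_def by simp
  then have "?t 0 = p \<and> (\<exists>r\<in>Q_M n. ?t r = q)" using pq(2) by auto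
  then show "\<exists>t\<in>empty_merging n. t 0 = p \<and> (\<exists>r\<in>Q_M n. t r = q) \<or> t 0 = q \<and> (\<exists>r\<in>Q_M n. t r = p)"
    using collision_map_in_empty_merging[OF pq] by (intro bexI[of _ ?t] disjI1)
qed

lemma word_act_apply_final:
  assumes "w \<in> lists (empty_merging n)" "w \<noteq> []"
  shows "word_act (\<lambda>t q. t q) w (n - 2) = n - 1"
  using empty_mergingD(5)[OF word_act_apply_empty_merging[OF assms]] .

lemma word_act_apply_empty:
  assumes "w \<in> lists (empty_merging n)"
  shows "word_act (\<lambda>t q. t q) w (n - 1) = n - 1"
  using assms
proof (induction w)
  case (Cons a w)
  then show ?case using empty_mergingD(4)[of a n] by simp
qed simp

lemma bifix_free_apply_empty_merging:
  assumes n: "n \<ge> 3"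
  shows "bifix_free (dfa_lang n (empty_merging n) (\<lambda>t q. t q))"
  unfolding bifix_free_def dfa_lang_def
proof (intro ballI allI impI conjI notI)
  let ?d = "\<lambda>t q. t q :: nat"
  fix u v x :: "(nat \<Rightarrow> nat) list" assume u: "u \<in> {w \<in> lists (empty_merging n). word_act ?d w 0 = n - 2}"
    and v: "v \<in> {w \<in> lists (empty_merging n). word_act ?d w 0 = n - 2}" and x: "x \<noteq> []"
  show False if "v = u @ x"
    using u v x that word_act_apply_final[of x n] n by auto
  show False if vxu: "v = x @ u"
  proof -
    let ?s = "word_act ?d x 0"
    have "x \<in> lists (empty_merging n)" using v vxu by simp
    with x have "?s < n" "?s \<noteq> 0"
      using empty_mergingD(2,3)[OF word_act_apply_empty_merging] n by auto
    moreover have "u \<noteq> []" using u n by auto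
    then have "word_act ?d u \<in> empty_merging n" using u word_act_apply_empty_merging by blast
    moreover have "word_act ?d u ?s = word_act ?d u 0" using u v vxu by simp
    ultimately have "word_act ?d u 0 = n - 1"
      using empty_mergingD(6)[of "word_act ?d u" n ?s 0] by auto
    moreover have "word_act ?d u 0 = n - 2" using u by simp
    ultimately show False using n by linarith
  qed
qed

lemma distinguishable_apply_empty_merging:
  assumes n: "n \<ge> 3" and pq: "p < n" "q < n" "p \<noteq> q"
  shows "\<exists>w\<in>lists (empty_merging n).
    (word_act (\<lambda>t q. t q) w p = n - 2) \<noteq> (word_act (\<lambda>t q. t q) w q = n - 2)"
proof -
  have separate: "\<exists>w\<in>lists (empty_merging n).
      (word_act (\<lambda>t q. t q) w p = n - 2) \<noteq> (word_act (\<lambda>t q. t q) w q = n - 2)"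
    if "p < n" "q < n" "q \<noteq> p" "p < n - 2" for p q
  proof -
    let ?t = "\<lambda>x. if x = p then n - 2 else if x < n then n - 1 else x"
    have "?t \<in> empty_merging n" using one_point_map_in_empty_merging[OF that(4)] n by simp
    moreover have "?t p = n - 2" "?t q \<noteq> n - 2" using that n by auto
    ultimately show ?thesis by (intro bexI[of _ "[?t]"]) auto
  qed
  consider "p = n - 2 \<or> q = n - 2" | "p < n - 2" | "q < n - 2"
    using pq by linarith
  then show ?thesis
  proof cases
    case 1
    then show ?thesis using pq by (intro bexI[of _ "[]"]) auto
  next
    case 2
    then show ?thesis using separate[of p q] pq by simp
  next
    case 3
    then show ?thesis using separate[of q p] pq by metis
  qed
qed

lemma reachable_apply_empty_merging:
  assumes n: "n \<ge> 3" and q: "q < n"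
  shows "\<exists>w\<in>lists (empty_merging n). word_act (\<lambda>t q. t q) w 0 = q"
proof (cases "q = 0")
  case False
  let ?t = "\<lambda>x. if x = 0 then q else if x < n then n - 1 else x"
  have "?t \<in> empty_merging n" using one_point_map_in_empty_merging[of 0 n q] n q False by simp
  then show ?thesis by (intro bexI[of _ "[?t]"]) auto
qed (intro bexI[of _ "[]"], auto)

lemma bf_min_dfa_apply_empty_merging:
  assumes n: "n \<ge> 3"
  shows "bf_min_dfa n (empty_merging n) (\<lambda>t q. t q)"
  unfolding bf_min_dfa_def
proof (intro conjI ballI allI impI)
  fix w assume w: "w \<in> lists (empty_merging n)"
  show "word_act (\<lambda>t q. t q) w (n - 1) \<noteq> n - 2"
    using word_act_apply_empty[OF w] n by simp
  show "(word_act (\<lambda>t q. t q) w (n - 2) = n - 2) = (w = [])"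
    using word_act_apply_final[OF w] n by (cases "w = []") simp_all
qed (use n finite_empty_merging empty_mergingD(2) reachable_apply_empty_merging
    distinguishable_apply_empty_merging bifix_free_apply_empty_merging in auto)

subsection \<open>All-colliding minimal DFAs of bifix-free languages\<close>

locale bifix_free_min_dfa =
  fixes n :: nat and Al :: "'a set" and delta :: "'a \<Rightarrow> nat \<Rightarrow> nat"
  assumes min_dfa: "bf_min_dfa n Al delta" and three_le: "3 \<le> n"
begin

lemma letters_closed: "\<forall>a\<in>Al. \<forall>q<n. delta a q < n"
  using min_dfa unfolding bf_min_dfa_def by (elim conjE)

lemma reachable: "\<forall>q<n. \<exists>u\<in>lists Al. word_act delta u 0 = q"
  using min_dfa unfolding bf_min_dfa_def by (elim conjE)

lemma distinguishable: "\<forall>p<n. \<forall>q<n. p \<noteq> q \<longrightarrow>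
    (\<exists>w\<in>lists Al. (word_act delta w p = n - 2) \<noteq> (word_act delta w q = n - 2))"
  using min_dfa unfolding bf_min_dfa_def by (elim conjE)

lemma lang_bifix_free: "bifix_free (dfa_lang n Al delta)"
  using min_dfa unfolding bf_min_dfa_def by (elim conjE)

lemma empty_rejects: "\<forall>w\<in>lists Al. word_act delta w (n - 1) \<noteq> n - 2"
  using min_dfa unfolding bf_min_dfa_def by (elim conjE)

lemma final_accepts_only_Nil: "\<forall>w\<in>lists Al. word_act delta w (n - 2) = n - 2 \<longleftrightarrow> w = []"
  using min_dfa unfolding bf_min_dfa_def by (elim conjE)

lemma word_act_less: "w \<in> lists Al \<Longrightarrow> q < n \<Longrightarrow> word_act delta w q < n"
proof (induction w arbitrary: q)
  case (Cons a w)
  then have "delta a q < n" using letters_closed by simp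
  with Cons show ?case by simp
qed simp

lemma reaches_final:
  assumes "p < n" "p \<noteq> n - 1"
  shows "\<exists>v\<in>lists Al. word_act delta v p = n - 2"
proof -
  have "n - 1 < n" using three_le by simp
  with assms distinguishable obtain v where "v \<in> lists Al"
    "(word_act delta v p = n - 2) \<noteq> (word_act delta v (n - 1) = n - 2)"
    by blast
  with empty_rejects show ?thesis by blast
qed

lemma letter_empty:
  assumes a: "a \<in> Al"
  shows "delta a (n - 1) = n - 1"
proof (rule ccontr)
  assume "delta a (n - 1) \<noteq> n - 1"
  moreover have "delta a (n - 1) < n" using a letters_closed three_le by simp
  ultimately obtain v where "v \<in> lists Al" "word_act delta (a # v) (n - 1) = n - 2"
    using reaches_final by auto
  with a empty_rejects show False by (meson Cons_in_lists_iff)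
qed

lemma word_act_empty: "w \<in> lists Al \<Longrightarrow> word_act delta w (n - 1) = n - 1"
proof (induction w)
  case (Cons a w)
  then show ?case using letter_empty[of a] by simp
qed simp

lemma letter_final:
  assumes a: "a \<in> Al"
  shows "delta a (n - 2) = n - 1"
proof (rule ccontr)
  assume "delta a (n - 2) \<noteq> n - 1"
  moreover have "delta a (n - 2) < n" using a letters_closed three_le by simp
  ultimately obtain v where "v \<in> lists Al" "word_act delta (a # v) (n - 2) = n - 2"
    using reaches_final by auto
  with a final_accepts_only_Nil show False by (meson Cons_in_lists_iff list.discI)
qed

lemma word_act_final:
  assumes "w \<in> lists Al" "w \<noteq> []"
  shows "word_act delta w (n - 2) = n - 1"
proof (cases w)
  case (Cons a w')
  with assms have "a \<in> Al" "w' \<in> lists Al" by auto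
  with Cons show ?thesis using letter_final[of a] word_act_empty[of w'] by simp
qed (use assms in simp)

lemma not_accepted_with_prefix:
  assumes "u \<in> lists Al" "word_act delta u 0 = n - 2" "x \<in> lists Al" "x \<noteq> []"
  shows "word_act delta (x @ u) 0 \<noteq> n - 2"
proof
  assume "word_act delta (x @ u) 0 = n - 2"
  with assms have "u \<in> dfa_lang n Al delta" "x @ u \<in> dfa_lang n Al delta"
    unfolding dfa_lang_def by auto
  with assms(4) lang_bifix_free show False unfolding bifix_free_def by blast
qed

lemma word_act_merge_initial:
  assumes w: "w \<in> lists Al" "w \<noteq> []" and q: "q < n" "q \<noteq> 0"
    and merge: "word_act delta w 0 = word_act delta w q"
  shows "word_act delta w 0 = n - 1"
proof (rule ccontr)
  assume "word_act delta w 0 \<noteq> n - 1"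
  moreover have "word_act delta w 0 < n" using word_act_less[OF w(1)] three_le by simp
  ultimately obtain v where v: "v \<in> lists Al" "word_act delta (w @ v) 0 = n - 2"
    using reaches_final by auto
  obtain u where u: "u \<in> lists Al" "word_act delta u 0 = q"
    using reachable[rule_format, OF q(1)] by blast
  with q have "u \<noteq> []" by auto
  moreover have "word_act delta (u @ w @ v) 0 = n - 2" using u v merge by simp
  ultimately show False using not_accepted_with_prefix[of "w @ v" u] u v w by simp
qed

lemma word_act_nonzero:
  assumes w: "w \<in> lists Al" "w \<noteq> []" and q: "q < n"
  shows "word_act delta w q \<noteq> 0"
proof
  assume zero: "word_act delta w q = 0"
  obtain v where v: "v \<in> lists Al" "word_act delta v 0 = n - 2"
    using reaches_final[of 0] three_le by auto
  obtain u where u: "u \<in> lists Al" "word_act delta u 0 = q"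
    using reachable[rule_format, OF q] by blast
  have "word_act delta ((u @ w) @ v) 0 = n - 2" using u v zero by simp
  then show False using not_accepted_with_prefix[of v "u @ w"] u v w by simp
qed

lemma word_act_merge_colliding:
  assumes "colliding n (trans_sgrp n Al delta) p q"
    and w: "w \<in> lists Al" "w \<noteq> []" and merge: "word_act delta w p = word_act delta w q"
  shows "word_act delta w p = n - 1"
proof -
  obtain t r p' q' where t: "t \<in> trans_sgrp n Al delta" and r: "r \<in> Q_M n"
    and pq': "{p', q'} = {p, q}" "t 0 = p'" "t r = q'"
    using assms(1) unfolding colliding_def by blast
  then obtain w' where w': "t = induced n delta w'" "w' \<in> lists Al"
    unfolding trans_sgrp_def by blast
  have r_state: "0 < r" "r < n" using r three_le unfolding Q_M_def by auto
  then have "word_act delta w' 0 = p'" "word_act delta w' r = q'"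
    using pq' w' unfolding induced_def by auto
  moreover have "word_act delta w p' = word_act delta w q'"
    using pq'(1) merge by (auto simp: doubleton_eq_iff)
  ultimately have "word_act delta (w' @ w) 0 = n - 1"
    using word_act_merge_initial[of "w' @ w" r] w w' r_state by simp
  with \<open>word_act delta w' 0 = p'\<close> pq'(1) merge show ?thesis
    by (auto simp: doubleton_eq_iff)
qed

lemma word_act_merge:
  assumes col: "all_colliding n (trans_sgrp n Al delta)"
    and w: "w \<in> lists Al" "w \<noteq> []" and pq: "p < n" "q < n" "p \<noteq> q"
    and merge: "word_act delta w p = word_act delta w q"
  shows "word_act delta w p = n - 1"
proof -
  have Q_split: "s = 0 \<or> s \<in> {n - 2, n - 1} \<or> s \<in> Q_M n" if "s < n" for s
    using that unfolding Q_M_def by auto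
  consider "p = 0" | "q = 0" | "p \<in> {n - 2, n - 1} \<or> q \<in> {n - 2, n - 1}"
    | "p \<in> Q_M n" "q \<in> Q_M n"
    using Q_split[OF pq(1)] Q_split[OF pq(2)] by blast
  then show ?thesis
  proof cases
    case 1
    then show ?thesis using word_act_merge_initial[OF w pq(2)] pq merge by simp
  next
    case 2
    then show ?thesis using word_act_merge_initial[OF w pq(1)] pq merge by simp
  next
    case 3
    then show ?thesis using word_act_empty[OF w(1)] word_act_final[OF w] merge by auto
  next
    case 4
    with col pq(3) have "colliding n (trans_sgrp n Al delta) p q"
      unfolding all_colliding_def by blast
    then show ?thesis using word_act_merge_colliding w merge by blast
  qed
qed

lemma trans_sgrp_subset_empty_merging:
  assumes col: "all_colliding n (trans_sgrp n Al delta)"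
  shows "trans_sgrp n Al delta \<subseteq> empty_merging n"
proof
  fix t assume "t \<in> trans_sgrp n Al delta"
  then obtain w where w: "t = induced n delta w" "w \<in> lists Al" "w \<noteq> []"
    unfolding trans_sgrp_def by blast
  have t: "t q = word_act delta w q" if "q < n" for q using w(1) that unfolding induced_def by simp
  have "n - 1 < n" "n - 2 < n" using three_le by auto
  show "t \<in> empty_merging n"
  proof (rule empty_mergingI)
    show "t q = q" if "n \<le> q" for q using w(1) that unfolding induced_def by simp
    show "t q < n" "t q \<noteq> 0" if "q < n" for q
      using t[OF that] word_act_less[OF w(2) that] word_act_nonzero[OF w(2,3) that] by simp_all
    show "t (n - 1) = n - 1" "t (n - 2) = n - 1"
      using t \<open>n - 1 < n\<close> \<open>n - 2 < n\<close> word_act_empty[OF w(2)] word_act_final[OF w(2,3)] by simp_all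
    show "t p = n - 1" if "p < n" "q < n" "p \<noteq> q" "t p = t q" for p q
      using word_act_merge[OF col w(2,3) that(1-3)] that t by simp
  qed
qed

end

theorem mainTheorem9:
  fixes n :: nat
  assumes "n \<ge> 3"
  shows "(\<exists>(Al :: (nat \<Rightarrow> nat) set) (delta :: (nat \<Rightarrow> nat) \<Rightarrow> nat \<Rightarrow> nat).
            bf_min_dfa n Al delta \<and> all_colliding n (trans_sgrp n Al delta) \<and>
            trans_sgrp n Al delta = W_bf n) \<and>
         (\<forall>(Al :: 'a set) (delta :: 'a \<Rightarrow> nat \<Rightarrow> nat).
            bf_min_dfa n Al delta \<and> all_colliding n (trans_sgrp n Al delta) \<longrightarrow>
            trans_sgrp n Al delta \<subseteq> W_bf n)"
proof (intro conjI allI impI exI)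
  show "bf_min_dfa n (empty_merging n) (\<lambda>t q. t q)"
    using bf_min_dfa_apply_empty_merging[OF assms] .
  show "all_colliding n (trans_sgrp n (empty_merging n) (\<lambda>t q. t q))"
    using all_colliding_apply_empty_merging .
  show "trans_sgrp n (empty_merging n) (\<lambda>t q. t q) = W_bf n"
    using trans_sgrp_apply_empty_merging W_bf_eq_empty_merging by simp
next
  fix Al :: "'a set" and delta
  assume dfa: "bf_min_dfa n Al delta \<and> all_colliding n (trans_sgrp n Al delta)"
  then interpret bifix_free_min_dfa n Al delta
    using assms by unfold_locales auto
  show "trans_sgrp n Al delta \<subseteq> W_bf n"
    using trans_sgrp_subset_empty_merging dfa W_bf_eq_empty_merging by simp
qed

end
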